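(* Let $A$ be a random variable with values in $\{u,v\}$, $\mathbb{P}(A=u)=p_u$, $\mathbb{P}(A=v)=p_v$, $p_u+p_v=1$, and let $(U,V)$ be independent of $A$ and follow a bivariate $t$ distribution with location vector $(\mu,\mu)$, scale matrix $\Sigma=\begin{pmatrix}\sigma^2&\rho\sigma^2\\ \rho\sigma^2&\sigma^2\end{pmatrix}$ with $\sigma>0$, and degrees of freedom $\delta>2$. Let \[f(z)=p_u\,\mathbb{P}(U>z)\,\mathbb{E}[U+V\mid U>z]+p_v\,\mathbb{P}(V>z)\,\mathbb{E}[U+V\mid V>z].\] Then \[f(z)=2\mu\left(1-T_\delta\left(\frac{z-\mu}{\sigma};0,1\right)\right)+\sigma(1+\rho)\left(\frac{\delta}{\delta-2}\right)t_{\delta-2}\left(\frac{z-\mu}{\sigma};0,\frac{\delta}{\delta-2}\right).\]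
   Context: For $\nu>0$, $t_\nu(x;m,s^2)=\frac{\Gamma\left(\frac{\nu+1}{2}\right)}{\sqrt{s^2\nu\pi}\,\Gamma\left(\frac{\nu}{2}\right)}\left(1+\frac{(x-m)^2}{s^2\nu}\right)^{-\frac{\nu+1}{2}}$ is the density of the univariate $t$ distribution with $\nu$ degrees of freedom, location $m$ and squared scale $s^2$, and $T_\nu(\cdot;m,s^2)$ is its CDF. The bivariate $t$ distribution with location $m$, scale matrix $\Sigma$ and $\delta$ degrees of freedom has density proportional to $\left(1+(x-m)^\top\Sigma^{-1}(x-m)/\delta\right)^{-(\delta+2)/2}$. *)

theory Defs
  imports "HOL-Probability.Probability"
begin

text \<open>Density of the univariate t distribution with nu degrees of freedom,
  location m and squared scale s2.\<close>
definition t_dens :: "real \<Rightarrow> real \<Rightarrow> real \<Rightarrow> real \<Rightarrow> real" where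
  "t_dens \<nu> m s2 x =
     Gamma ((\<nu> + 1) / 2) / (sqrt (s2 * \<nu> * pi) * Gamma (\<nu> / 2))
     * (1 + (x - m)\<^sup>2 / (s2 * \<nu>)) powr (- ((\<nu> + 1) / 2))"

definition t_cdf :: "real \<Rightarrow> real \<Rightarrow> real \<Rightarrow> real \<Rightarrow> real" where
  "t_cdf \<nu> m s2 x = (LINT y|lborel. indicator {..x} y * t_dens \<nu> m s2 y)"

text \<open>Density of the bivariate t distribution with location (m1,m2),
  symmetric positive definite scale matrix [[s11,s12],[s12,s22]] and delta degrees
  of freedom:  Gamma((delta+2)/2) / (Gamma(delta/2) delta pi sqrt(det Sigma))
  * (1 + (x-m)^T Sigma^-1 (x-m)/delta)^(-(delta+2)/2).\<close>
definition bvt_dens :: "real \<Rightarrow> real \<Rightarrow> real \<Rightarrow> real \<Rightarrow> real \<Rightarrow> real \<Rightarrow> real \<times> real \<Rightarrow> real" where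
  "bvt_dens m1 m2 s11 s12 s22 \<delta> xy =
     (let d = s11 * s22 - s12\<^sup>2; a = fst xy - m1; b = snd xy - m2;
          q = (s22 * a\<^sup>2 - 2 * s12 * a * b + s11 * b\<^sup>2) / d
      in Gamma ((\<delta> + 2) / 2) / (Gamma (\<delta> / 2) * \<delta> * pi * sqrt d)
         * (1 + q / \<delta>) powr (- ((\<delta> + 2) / 2)))"

definition cond_exp_event :: "'a measure \<Rightarrow> ('a \<Rightarrow> real) \<Rightarrow> 'a set \<Rightarrow> real" where
  "cond_exp_event M X B = (LINT \<omega>|M. X \<omega> * indicator B \<omega>) / measure M B"

end

theory Submission
  imports Defs "HOL-Real_Asymp.Real_Asymp"
begin

(* The bivariate t density factors as the marginal density t_delta(x; mu, sigma^2) of U times a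
   t density with delta + 1 degrees of freedom in the second variable, located at
   mu + rho (x - mu).  Integrating the second variable out first gives
     E[(U + V) 1{U > z}] = int_z^oo (2 mu + (1 + rho) (x - mu)) t_delta(x; mu, sigma^2) dx.
   The first part is a tail probability; the second is explicit because
     d/dw t_(delta-2)(w; 0, delta/(delta-2)) = -((delta-2)/delta) w t_delta(w; 0, 1).
   By exchangeability of (U, V) the term for V > z has the same value, and p_u + p_v = 1. *)

lemma interval_integral_Beta:
  fixes a b :: real
  assumes "a > 0" and "b > 0"
  shows "set_integrable lborel (einterval 0 1) (\<lambda>s. s powr (a - 1) * (1 - s) powr (b - 1))"
    and "(LBINT s=0..1. s powr (a - 1) * (1 - s) powr (b - 1)) = Beta a b"
proof -
  have Beta: "set_integrable lborel {0..1} (\<lambda>s. s powr (a - 1) * (1 - s) powr (b - 1))"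
    using assms by (rule integrable_Beta)
  then show "set_integrable lborel (einterval 0 1) (\<lambda>s. s powr (a - 1) * (1 - s) powr (b - 1))"
    unfolding zero_ereal_def one_ereal_def by (rule set_integrable_subset) auto
  have "(LBINT s=0..1. s powr (a - 1) * (1 - s) powr (b - 1))
      = (LBINT s:{0<..<1}. s powr (a - 1) * (1 - s) powr (b - 1))"
    unfolding zero_ereal_def one_ereal_def by (simp add: interval_lebesgue_integral_def)
  also have "\<dots> = (LBINT s:{0..1}. s powr (a - 1) * (1 - s) powr (b - 1))"
    by (rule set_integral_discrete_difference[where X="{0, 1}"]) auto
  also have "\<dots> = integral {0..1} (\<lambda>s. s powr (a - 1) * (1 - s) powr (b - 1))"
    using Beta by (rule set_borel_integral_eq_integral)
  also have "\<dots> = Beta a b"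
    using assms by (intro integral_unique has_integral_Beta_real)
  finally show "(LBINT s=0..1. s powr (a - 1) * (1 - s) powr (b - 1)) = Beta a b" .
qed

lemma one_plus_square_powr_Beta_substitution:
  fixes c s :: real
  assumes s: "0 < s" "s < 1"
  shows "(1 + (sqrt (s / (1 - s)))\<^sup>2) powr -c * (1 / (2 * sqrt (s / (1 - s)) * (1 - s)\<^sup>2))
           = s powr (1/2 - 1) * (1 - s) powr ((c - 1/2) - 1) / 2"
proof -
  have "1 + (sqrt (s / (1 - s)))\<^sup>2 = 1 / (1 - s)"
    using s by (simp add: field_simps)
  then have kernel: "(1 + (sqrt (s / (1 - s)))\<^sup>2) powr -c = (1 - s) powr c"
    using s by (simp add: powr_minus_divide powr_divide)
  have "(1 - s)\<^sup>2 = (1 - s) powr (1/2) * (1 - s) powr (3/2)"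
    using s by (simp add: powr_add[symmetric] powr_numeral)
  then have jacobian: "1 / (2 * sqrt (s / (1 - s)) * (1 - s)\<^sup>2) = (1 - s) powr (1/2 - 2) * s powr (1/2 - 1) / 2"
    using s by (simp add: powr_half_sqrt[symmetric] powr_divide powr_diff powr_minus powr_numeral field_simps)
  have "(1 - s) powr c * (1 - s) powr (1/2 - 2) = (1 - s) powr ((c - 1/2) - 1)"
    using s by (simp add: powr_add[symmetric])
  then show ?thesis
    unfolding kernel jacobian by (simp add: ac_simps)
qed

lemma has_bochner_integral_Ioi_one_plus_square_powr:
  fixes c :: real
  assumes c: "c > 1/2"
  shows "has_bochner_integral lborel (\<lambda>t. indicator {0<..} t * (1 + t\<^sup>2) powr -c)
           (Beta (1/2) (c - 1/2) / 2)"
proof -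
  define f where "f = (\<lambda>t::real. (1 + t\<^sup>2) powr -c)"
  define g where "g = (\<lambda>s::real. sqrt (s / (1 - s)))"
  define g' where "g' = (\<lambda>s::real. 1 / (2 * sqrt (s / (1 - s)) * (1 - s)\<^sup>2))"
  have subst: "f (g s) * g' s = s powr (1/2 - 1) * (1 - s) powr ((c - 1/2) - 1) / 2"
    if "s \<in> einterval 0 1" for s
    using that unfolding f_def g_def g'_def
    by (intro one_plus_square_powr_Beta_substitution) (simp_all add: zero_ereal_def one_ereal_def)
  have Beta_params: "1/2 > (0::real)" "c - 1/2 > 0"
    using c by simp_all
  have "set_integrable lborel (einterval 0 1) (\<lambda>s. f (g s) * g' s)"
    using interval_integral_Beta(1)[OF Beta_params] by (subst set_integrable_cong[OF refl refl subst]) auto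
  moreover have "(LBINT s=0..1. f (g s) * g' s) = Beta (1/2) (c - 1/2) / 2"
    using interval_integral_Beta(2)[OF Beta_params] by (subst interval_integral_cong[OF subst]) auto
  moreover have "DERIV g s :> g' s" if "0 < s" "s < 1" for s
    using that unfolding g_def g'_def
    by (auto intro!: derivative_eq_intros simp: field_simps power2_eq_square)
  moreover have "isCont f t" for t
    unfolding f_def by (intro continuous_intros) (simp add: add_nonneg_eq_0_iff)
  moreover have "isCont g' s" if "0 < s" "s < 1" for s
    using that unfolding g'_def by (intro continuous_intros) auto
  moreover have "((ereal \<circ> g \<circ> real_of_ereal) \<longlongrightarrow> 0) (at_right 0)"
    unfolding zero_ereal_def comp_assoc[symmetric] ereal_tendsto_simps g_def
    by (rule tendsto_eq_intros | simp)+
  moreover have "((ereal \<circ> g \<circ> real_of_ereal) \<longlongrightarrow> \<infinity>) (at_left 1)"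
    unfolding one_ereal_def comp_assoc[symmetric] ereal_tendsto_simps g_def
    by real_asymp
  ultimately have "set_integrable lborel (einterval 0 \<infinity>) f"
      and "(LBINT t=0..\<infinity>. f t) = Beta (1/2) (c - 1/2) / 2"
    using interval_integral_substitution_nonneg[of 0 1 g g' f 0 \<infinity>]
    by (auto simp: zero_ereal_def one_ereal_def f_def g'_def)
  then show ?thesis
    by (simp add: has_bochner_integral_iff set_integrable_def set_lebesgue_integral_def
                  interval_integral_to_infinity_eq zero_ereal_def f_def)
qed

lemma has_bochner_integral_even:
  fixes f :: "real \<Rightarrow> real"
  assumes even: "\<And>x. f (- x) = f x"
    and half: "has_bochner_integral lborel (\<lambda>x. indicator {0<..} x * f x) I"
  shows "has_bochner_integral lborel f (2 * I)"
proof -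
  define h where "h = (\<lambda>x. indicator {0<..} x * f x)"
  have h: "integrable lborel h" "integral\<^sup>L lborel h = I"
    using half by (simp_all add: has_bochner_integral_iff h_def)
  have h_reflected: "integrable lborel (\<lambda>x. h (- x))" "integral\<^sup>L lborel (\<lambda>x. h (- x)) = I"
    using lborel_integrable_real_affine[OF h(1), of "-1" 0] lborel_integral_real_affine[of "-1" h 0] h(2)
    by simp_all
  have split: "h x + h (- x) = f x" if "x \<noteq> 0" for x
    using that even[of x] by (auto simp: h_def indicator_def)
  have "has_bochner_integral lborel (\<lambda>x. h x + h (- x)) (2 * I)"
    using h h_reflected by (auto simp: has_bochner_integral_iff)
  then show ?thesis
    by (rule has_bochner_integral_discrete_difference[where X="{0}", THEN iffD1, rotated -1])
       (auto simp: split)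
qed

lemma lborel_integral_odd_eq_0:
  fixes f :: "real \<Rightarrow> real"
  assumes odd: "\<And>x. f (- x) = - f x"
  shows "integral\<^sup>L lborel f = 0"
proof -
  have "integral\<^sup>L lborel f = integral\<^sup>L lborel (\<lambda>x. f (0 + (-1) * x))"
    using lborel_integral_real_affine[of "-1" f 0] by simp
  also have "\<dots> = - integral\<^sup>L lborel f"
    by (simp add: odd)
  finally show ?thesis
    by simp
qed

lemma has_bochner_integral_lborel_rescale:
  fixes h :: "real \<Rightarrow> real"
  assumes "has_bochner_integral lborel h I" and "s > 0"
  shows "has_bochner_integral lborel (\<lambda>x. h ((x - m) / s)) (s * I)"
proof -
  have h: "(\<lambda>x. h ((m + s * x - m) / s)) = h"
    using \<open>s > 0\<close> by (auto simp: fun_eq_iff)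
  show ?thesis
    using assms lborel_integrable_real_affine_iff[of s "\<lambda>x. h ((x - m) / s)" m]
      lborel_integral_real_affine[of s "\<lambda>x. h ((x - m) / s)" m]
    by (simp add: has_bochner_integral_iff h)
qed

lemma has_bochner_integral_one_plus_square_powr:
  fixes c :: real
  assumes "c > 1/2"
  shows "has_bochner_integral lborel (\<lambda>t. (1 + t\<^sup>2) powr -c) (Beta (1/2) (c - 1/2))"
  using has_bochner_integral_even[OF _ has_bochner_integral_Ioi_one_plus_square_powr[OF assms]]
  by simp

lemma has_bochner_integral_mult_one_plus_square_powr:
  fixes c :: real
  assumes c: "c > 1"
  shows "has_bochner_integral lborel (\<lambda>t. t * (1 + t\<^sup>2) powr -c) 0"
proof -
  have majorant: "integrable lborel (\<lambda>t. (1 + t\<^sup>2) powr (1/2 - c))"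
    using has_bochner_integral_one_plus_square_powr[of "c - 1/2"] c
    by (simp add: has_bochner_integral_iff)
  have bound: "\<bar>t * (1 + t\<^sup>2) powr -c\<bar> \<le> (1 + t\<^sup>2) powr (1/2 - c)" for t :: real
  proof -
    have pos: "0 < 1 + t\<^sup>2"
      by (simp add: add_pos_nonneg)
    have "\<bar>t\<bar> \<le> (1 + t\<^sup>2) powr (1/2)"
      using pos by (simp add: powr_half_sqrt real_le_rsqrt)
    then have "\<bar>t\<bar> * (1 + t\<^sup>2) powr -c \<le> (1 + t\<^sup>2) powr (1/2) * (1 + t\<^sup>2) powr -c"
      by (rule mult_right_mono) simp
    also have "\<dots> = (1 + t\<^sup>2) powr (1/2 - c)"
      using pos by (simp add: powr_add[symmetric])
    finally show ?thesis
      by (simp add: abs_mult)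
  qed
  have "integrable lborel (\<lambda>t. t * (1 + t\<^sup>2) powr -c)"
    by (rule Bochner_Integration.integrable_bound[OF majorant]) (auto intro!: AE_I2 simp: bound)
  moreover have "integral\<^sup>L lborel (\<lambda>t. t * (1 + t\<^sup>2) powr -c) = 0"
    by (rule lborel_integral_odd_eq_0) simp
  ultimately show ?thesis
    by (simp add: has_bochner_integral_iff)
qed

lemma t_dens_nonneg:
  assumes "\<nu> > 0" and "s2 \<ge> 0"
  shows "t_dens \<nu> m s2 x \<ge> 0"
  using assms by (simp add: t_dens_def Gamma_real_pos less_imp_le)

lemma t_dens_eq_kernel:
  assumes "s2 * \<nu> \<ge> 0"
  shows "t_dens \<nu> m s2 x = t_dens \<nu> m s2 m * (1 + ((x - m) / sqrt (s2 * \<nu>))\<^sup>2) powr -((\<nu> + 1) / 2)"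
  using assms by (simp add: t_dens_def power_divide)

lemma isCont_t_dens:
  assumes "s2 * \<nu> > 0"
  shows "isCont (t_dens \<nu> m s2) x"
proof -
  have "1 + ((y - m) / sqrt (s2 * \<nu>))\<^sup>2 \<noteq> 0" for y
    by (simp add: add_nonneg_eq_0_iff)
  then have "isCont (\<lambda>y. t_dens \<nu> m s2 m * (1 + ((y - m) / sqrt (s2 * \<nu>))\<^sup>2) powr -((\<nu> + 1) / 2)) x"
    using assms by (intro continuous_intros) auto
  moreover have "t_dens \<nu> m s2 = (\<lambda>y. t_dens \<nu> m s2 m * (1 + ((y - m) / sqrt (s2 * \<nu>))\<^sup>2) powr -((\<nu> + 1) / 2))"
    using assms by (intro ext t_dens_eq_kernel) simp
  ultimately show ?thesis
    by simp
qed

lemma t_dens_affine: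
  assumes "s2 > 0"
  shows "sqrt s2 * t_dens \<nu> m s2 (m + sqrt s2 * w) = t_dens \<nu> 0 1 w"
  using assms by (simp add: t_dens_def power_mult_distrib real_sqrt_mult)

lemma has_bochner_integral_t_dens:
  assumes \<nu>: "\<nu> > 0" and s2: "s2 > 0"
  shows "has_bochner_integral lborel (t_dens \<nu> m s2) 1"
proof -
  define S where "S = sqrt (s2 * \<nu>)"
  define C where "C = t_dens \<nu> m s2 m"
  have S: "S > 0"
    using assms by (simp add: S_def)
  have kernel: "t_dens \<nu> m s2 = (\<lambda>x. C * (1 + ((x - m) / S)\<^sup>2) powr -((\<nu> + 1) / 2))"
    using assms unfolding C_def S_def by (intro ext t_dens_eq_kernel) simp
  have c: "(\<nu> + 1) / 2 > 1/2" and Beta_arg: "(\<nu> + 1) / 2 - 1/2 = \<nu> / 2"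
    using \<nu> by (simp_all add: field_simps)
  have "has_bochner_integral lborel (\<lambda>x. (1 + ((x - m) / S)\<^sup>2) powr -((\<nu> + 1) / 2))
          (S * Beta (1/2) (\<nu> / 2))"
    using has_bochner_integral_lborel_rescale[OF has_bochner_integral_one_plus_square_powr[OF c] S]
    unfolding Beta_arg .
  then have "has_bochner_integral lborel (t_dens \<nu> m s2) (C * (S * Beta (1/2) (\<nu> / 2)))"
    unfolding kernel by (rule has_bochner_integral_mult_right)
  moreover have "C * (S * Beta (1/2) (\<nu> / 2)) = 1"
  proof -
    have "1/2 + \<nu> / 2 = (\<nu> + 1) / 2"
      by simp
    then have "Beta (1/2) (\<nu> / 2) = sqrt pi * Gamma (\<nu> / 2) / Gamma ((\<nu> + 1) / 2)"
      unfolding Beta_def Gamma_one_half_real by presburger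
    moreover have "Gamma (\<nu> / 2) \<noteq> 0" "Gamma ((\<nu> + 1) / 2) \<noteq> 0"
      using \<nu> by (auto intro!: dual_order.strict_implies_not_eq)
    ultimately show ?thesis
      using assms by (simp add: C_def t_dens_def S_def real_sqrt_mult)
  qed
  ultimately show ?thesis
    by simp
qed

lemma has_bochner_integral_t_dens_centered:
  assumes \<nu>: "\<nu> > 1" and s2: "s2 > 0"
  shows "has_bochner_integral lborel (\<lambda>x. (x - m) * t_dens \<nu> m s2 x) 0"
proof -
  define S where "S = sqrt (s2 * \<nu>)"
  define C where "C = t_dens \<nu> m s2 m"
  have S: "S > 0"
    using assms by (simp add: S_def)
  have kernel: "t_dens \<nu> m s2 x = C * (1 + ((x - m) / S)\<^sup>2) powr -((\<nu> + 1) / 2)" for x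
    using assms unfolding C_def S_def by (intro t_dens_eq_kernel) simp
  have c: "(\<nu> + 1) / 2 > 1"
    using \<nu> by simp
  have "has_bochner_integral lborel
          (\<lambda>x. (x - m) / S * (1 + ((x - m) / S)\<^sup>2) powr -((\<nu> + 1) / 2)) (S * 0)"
    by (rule has_bochner_integral_lborel_rescale[OF has_bochner_integral_mult_one_plus_square_powr[OF c] S])
  then have "has_bochner_integral lborel
          (\<lambda>x. (C * S) * ((x - m) / S * (1 + ((x - m) / S)\<^sup>2) powr -((\<nu> + 1) / 2))) ((C * S) * (S * 0))"
    by (rule has_bochner_integral_mult_right)
  moreover have "(C * S) * ((x - m) / S * (1 + ((x - m) / S)\<^sup>2) powr -((\<nu> + 1) / 2))
      = (x - m) * t_dens \<nu> m s2 x" for x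
    unfolding kernel using S by simp
  ultimately show ?thesis
    by simp
qed

lemma has_bochner_integral_t_dens_first_moment:
  assumes "\<nu> > 1" and "s2 > 0"
  shows "has_bochner_integral lborel (\<lambda>y. (a + y) * t_dens \<nu> m s2 y) (a + m)"
proof -
  have "has_bochner_integral lborel (\<lambda>y. (a + m) * t_dens \<nu> m s2 y + (y - m) * t_dens \<nu> m s2 y)
          ((a + m) * 1 + 0)"
    using assms
    by (intro has_bochner_integral_add has_bochner_integral_mult_right has_bochner_integral_t_dens
          has_bochner_integral_t_dens_centered) auto
  then show ?thesis
    by (simp add: algebra_simps)
qed

lemma integral_Iic_t_dens:
  assumes s2: "s2 > 0"
  shows "(\<integral>x. indicator {..z} x * t_dens \<nu> m s2 x \<partial>lborel) = t_cdf \<nu> 0 1 ((z - m) / sqrt s2)"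
proof -
  have "(\<integral>x. indicator {..z} x * t_dens \<nu> m s2 x \<partial>lborel)
      = \<bar>sqrt s2\<bar> *\<^sub>R (\<integral>w. indicator {..z} (m + sqrt s2 * w) * t_dens \<nu> m s2 (m + sqrt s2 * w) \<partial>lborel)"
    using s2 by (intro lborel_integral_real_affine) simp
  also have "\<dots> = (\<integral>w. sqrt s2 * (indicator {..z} (m + sqrt s2 * w) * t_dens \<nu> m s2 (m + sqrt s2 * w)) \<partial>lborel)"
    using s2 by simp
  also have "\<dots> = (\<integral>w. indicator {..(z - m) / sqrt s2} w * t_dens \<nu> 0 1 w \<partial>lborel)"
  proof (rule Bochner_Integration.integral_cong[OF refl])
    fix w
    have "indicator {..z} (m + sqrt s2 * w) = (indicator {..(z - m) / sqrt s2} w :: real)"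
      using s2 by (auto simp: indicator_def field_simps)
    then show "sqrt s2 * (indicator {..z} (m + sqrt s2 * w) * t_dens \<nu> m s2 (m + sqrt s2 * w))
        = indicator {..(z - m) / sqrt s2} w * t_dens \<nu> 0 1 w"
      using t_dens_affine[OF s2, of \<nu> m w] by (simp add: ac_simps)
  qed
  finally show ?thesis
    unfolding t_cdf_def .
qed

lemma integral_Ioi_t_dens:
  assumes "\<nu> > 0" and "s2 > 0"
  shows "(\<integral>x. indicator {z<..} x * t_dens \<nu> m s2 x \<partial>lborel) = 1 - t_cdf \<nu> 0 1 ((z - m) / sqrt s2)"
proof -
  have t: "integrable lborel (t_dens \<nu> m s2)" "integral\<^sup>L lborel (t_dens \<nu> m s2) = 1"
    using has_bochner_integral_t_dens[OF assms] by (simp_all add: has_bochner_integral_iff)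
  have "(\<lambda>x. indicator {z<..} x * t_dens \<nu> m s2 x) = (\<lambda>x. t_dens \<nu> m s2 x - indicator {..z} x * t_dens \<nu> m s2 x)"
    by (auto simp: fun_eq_iff indicator_def)
  moreover have "integrable lborel (\<lambda>x. indicator {..z} x * t_dens \<nu> m s2 x)"
    using integrable_mult_indicator[OF _ t(1), of "{..z}"] by simp
  ultimately show ?thesis
    using t integral_Iic_t_dens[OF \<open>s2 > 0\<close>] by simp
qed

lemma t_dens_lower_dof_at_0:
  assumes \<nu>: "\<nu> > 2"
  shows "(\<nu> - 1) * t_dens (\<nu> - 2) 0 (\<nu> / (\<nu> - 2)) 0 = (\<nu> - 2) * t_dens \<nu> 0 1 0"
proof -
  have "(\<nu> - 1) / 2 \<notin> \<int>\<^sub>\<le>\<^sub>0" "(\<nu> - 2) / 2 \<notin> \<int>\<^sub>\<le>\<^sub>0"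
    using \<nu> by (auto dest: nonpos_Ints_nonpos)
  moreover have "(\<nu> + 1) / 2 = (\<nu> - 1) / 2 + 1" "\<nu> / 2 = (\<nu> - 2) / 2 + 1"
    by (simp_all add: field_simps)
  ultimately have Gamma_rec: "Gamma ((\<nu> + 1) / 2) = (\<nu> - 1) / 2 * Gamma ((\<nu> - 1) / 2)"
    "Gamma (\<nu> / 2) = (\<nu> - 2) / 2 * Gamma ((\<nu> - 2) / 2)"
    by (metis Gamma_plus1)+
  have dof: "\<nu> / (\<nu> - 2) * (\<nu> - 2) = \<nu>" "(\<nu> - 2 + 1) / 2 = (\<nu> - 1) / 2"
    using \<nu> by (simp_all add: field_simps)
  have "Gamma ((\<nu> - 2) / 2) \<noteq> 0" "sqrt (\<nu> * pi) \<noteq> 0" "\<nu> - 2 \<noteq> 0"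
    using \<nu> by (auto intro!: dual_order.strict_implies_not_eq)
  then show ?thesis
    unfolding t_dens_def Gamma_rec dof by (simp add: field_simps)
qed

lemma t_dens_lower_dof_deriv:
  assumes \<nu>: "\<nu> > 2"
  shows "((\<lambda>w. t_dens (\<nu> - 2) 0 (\<nu> / (\<nu> - 2)) w) has_real_derivative
           - ((\<nu> - 2) / \<nu>) * w * t_dens \<nu> 0 1 w) (at w)"
proof -
  define C where "C = t_dens \<nu> 0 1 0"
  define C' where "C' = t_dens (\<nu> - 2) 0 (\<nu> / (\<nu> - 2)) 0"
  have t_dens: "t_dens \<nu> 0 1 w = C * (1 + w\<^sup>2 / \<nu>) powr -((\<nu> + 1) / 2)"
    by (simp add: t_dens_def C_def)
  have t_dens': "t_dens (\<nu> - 2) 0 (\<nu> / (\<nu> - 2)) = (\<lambda>w. C' * (1 + w\<^sup>2 / \<nu>) powr -((\<nu> - 1) / 2))"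
  proof -
    have "\<nu> / (\<nu> - 2) * (\<nu> - 2) = \<nu>" "(\<nu> - 2 + 1) / 2 = (\<nu> - 1) / 2"
      using \<nu> by (simp_all add: field_simps)
    then show ?thesis
      by (simp add: fun_eq_iff t_dens_def C'_def)
  qed
  have "((\<lambda>w. C' * (1 + w\<^sup>2 / \<nu>) powr -((\<nu> - 1) / 2)) has_real_derivative
      C' * (-((\<nu> - 1) / 2) * (1 + w\<^sup>2 / \<nu>) powr (-((\<nu> - 1) / 2) - 1) * (2 * w / \<nu>))) (at w)"
    using \<nu> by (auto intro!: derivative_eq_intros simp: add_pos_nonneg power2_eq_square field_simps)
  moreover have "-((\<nu> - 1) / 2) - 1 = -((\<nu> + 1) / 2)"
    by (simp add: field_simps)
  then have "C' * (-((\<nu> - 1) / 2) * (1 + w\<^sup>2 / \<nu>) powr (-((\<nu> - 1) / 2) - 1) * (2 * w / \<nu>))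
      = - ((\<nu> - 1) * C') * w * (1 + w\<^sup>2 / \<nu>) powr -((\<nu> + 1) / 2) / \<nu>"
    by simp
  also have "\<dots> = - ((\<nu> - 2) / \<nu>) * w * t_dens \<nu> 0 1 w"
    unfolding C'_def t_dens_lower_dof_at_0[OF \<nu>] t_dens C_def by simp
  ultimately show ?thesis
    unfolding t_dens' by (rule DERIV_cong)
qed

lemma t_dens_tendsto_at_top:
  assumes "\<nu> > 0" and "s2 > 0"
  shows "(t_dens \<nu> m s2 \<longlongrightarrow> 0) at_top"
proof -
  define S where "S = sqrt (s2 * \<nu>)"
  define C where "C = t_dens \<nu> m s2 m"
  have "S > 0"
    using assms by (simp add: S_def)
  then have "filterlim (\<lambda>x. 1 + ((x - m) / S)\<^sup>2) at_top at_top"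
    by real_asymp
  then have "((\<lambda>x. (1 + ((x - m) / S)\<^sup>2) powr -((\<nu> + 1) / 2)) \<longlongrightarrow> 0) at_top"
    by (rule tendsto_neg_powr[rotated]) (use assms in simp)
  then have "((\<lambda>x. C * (1 + ((x - m) / S)\<^sup>2) powr -((\<nu> + 1) / 2)) \<longlongrightarrow> 0) at_top"
    by (rule tendsto_mult_right_zero)
  moreover have "t_dens \<nu> m s2 = (\<lambda>x. C * (1 + ((x - m) / S)\<^sup>2) powr -((\<nu> + 1) / 2))"
    using assms unfolding C_def S_def by (intro ext t_dens_eq_kernel) simp
  ultimately show ?thesis
    by simp
qed

lemma t_dens_centered_antideriv:
  assumes \<nu>: "\<nu> > 2" and s2: "s2 > 0"
  shows "((\<lambda>x. - sqrt s2 * (\<nu> / (\<nu> - 2)) * t_dens (\<nu> - 2) 0 (\<nu> / (\<nu> - 2)) ((x - m) / sqrt s2))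
           has_real_derivative (x - m) * t_dens \<nu> m s2 x) (at x)"
proof -
  define w where "w = (x - m) / sqrt s2"
  have "((\<lambda>x. (x - m) / sqrt s2) has_real_derivative 1 / sqrt s2) (at x)"
    using DERIV_cdivide[OF DERIV_diff[OF DERIV_ident DERIV_const], where c="sqrt s2"] by simp
  from DERIV_chain2[OF t_dens_lower_dof_deriv[OF \<nu>] this]
  have "((\<lambda>x. - sqrt s2 * (\<nu> / (\<nu> - 2)) * t_dens (\<nu> - 2) 0 (\<nu> / (\<nu> - 2)) ((x - m) / sqrt s2))
      has_real_derivative
        - sqrt s2 * (\<nu> / (\<nu> - 2)) * (- ((\<nu> - 2) / \<nu>) * w * t_dens \<nu> 0 1 w * (1 / sqrt s2))) (at x)"
    unfolding w_def by (rule DERIV_cmult)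
  moreover have "- sqrt s2 * (\<nu> / (\<nu> - 2)) * (- ((\<nu> - 2) / \<nu>) * w * t_dens \<nu> 0 1 w * (1 / sqrt s2))
      = w * t_dens \<nu> 0 1 w"
    using \<nu> s2 by simp
  moreover have "w * t_dens \<nu> 0 1 w = (x - m) * t_dens \<nu> m s2 x"
    using t_dens_affine[OF s2, of \<nu> m w, symmetric] s2 by (simp add: w_def)
  ultimately show ?thesis
    by (metis DERIV_cong)
qed

lemma integral_Ioi_t_dens_centered:
  assumes \<nu>: "\<nu> > 2" and s2: "s2 > 0"
  shows "(\<integral>x. indicator {z<..} x * ((x - m) * t_dens \<nu> m s2 x) \<partial>lborel)
           = sqrt s2 * (\<nu> / (\<nu> - 2)) * t_dens (\<nu> - 2) 0 (\<nu> / (\<nu> - 2)) ((z - m) / sqrt s2)"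
proof -
  define F where "F x = - sqrt s2 * (\<nu> / (\<nu> - 2)) * t_dens (\<nu> - 2) 0 (\<nu> / (\<nu> - 2)) ((x - m) / sqrt s2)"
    for x
  have F_deriv: "(F has_real_derivative (x - m) * t_dens \<nu> m s2 x) (at x)" for x
    unfolding F_def[abs_def] using assms by (rule t_dens_centered_antideriv)
  have F_at_z: "((F \<circ> real_of_ereal) \<longlongrightarrow> F z) (at_right (ereal z))"
    unfolding ereal_tendsto_simps using DERIV_isCont[OF F_deriv[of z]] unfolding isCont_def
    by (rule tendsto_mono[rotated]) (simp add: at_le)
  have "((\<lambda>x. t_dens (\<nu> - 2) 0 (\<nu> / (\<nu> - 2)) ((x - m) / sqrt s2)) \<longlongrightarrow> 0) at_top"
  proof (rule filterlim_compose[OF t_dens_tendsto_at_top])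
    show "filterlim (\<lambda>x. (x - m) / sqrt s2) at_top at_top"
      using s2 by real_asymp
  qed (use \<nu> in auto)
  then have F_at_top: "((F \<circ> real_of_ereal) \<longlongrightarrow> 0) (at_left \<infinity>)"
    unfolding ereal_tendsto_simps F_def[abs_def] by (rule tendsto_mult_right_zero)
  have "integrable lborel (\<lambda>x. (x - m) * t_dens \<nu> m s2 x)"
    using has_bochner_integral_t_dens_centered[OF _ s2, of \<nu> m] \<nu> by (simp add: has_bochner_integral_iff)
  then have "set_integrable lborel (einterval z \<infinity>) (\<lambda>x. (x - m) * t_dens \<nu> m s2 x)"
    unfolding set_integrable_def by (intro integrable_mult_indicator) auto
  moreover have "isCont (\<lambda>x. (x - m) * t_dens \<nu> m s2 x) x" for x
    using \<nu> s2 by (intro continuous_intros isCont_t_dens) simp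
  ultimately have "(LBINT x=ereal z..\<infinity>. (x - m) * t_dens \<nu> m s2 x) = 0 - F z"
    using F_deriv F_at_z F_at_top
    by (intro interval_integral_FTC_integrable) (auto simp: has_real_derivative_iff_has_vector_derivative)
  then show ?thesis
    by (simp add: interval_integral_to_infinity_eq set_lebesgue_integral_def F_def)
qed

text \<open>Location and squared scale of the conditional distribution of the second coordinate given
  that the first equals \<open>x\<close>, a t distribution with \<open>\<delta> + 1\<close> degrees of freedom.\<close>

definition bvt_cond_loc :: "real \<Rightarrow> real \<Rightarrow> real \<Rightarrow> real \<Rightarrow> real \<Rightarrow> real" where
  "bvt_cond_loc m1 m2 s11 s12 x = m2 + s12 / s11 * (x - m1)"

definition bvt_cond_scale :: "real \<Rightarrow> real \<Rightarrow> real \<Rightarrow> real \<Rightarrow> real \<Rightarrow> real \<Rightarrow> real" where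
  "bvt_cond_scale m1 s11 s12 s22 \<delta> x = (\<delta> + (x - m1)\<^sup>2 / s11) / (\<delta> + 1) * ((s11 * s22 - s12\<^sup>2) / s11)"

lemma bvt_cond_scale_pos:
  assumes "s11 > 0" and "s11 * s22 - s12\<^sup>2 > 0" and "\<delta> > 0"
  shows "bvt_cond_scale m1 s11 s12 s22 \<delta> x > 0"
  using assms by (simp add: bvt_cond_scale_def add_pos_nonneg)

lemma bvt_cond_scale_mult_dof:
  assumes "s11 \<noteq> 0" and "\<delta> > 0"
  shows "bvt_cond_scale m1 s11 s12 s22 \<delta> x * (\<delta> + 1)
           = \<delta> * (s11 * s22 - s12\<^sup>2) / s11 * (1 + (x - m1)\<^sup>2 / (s11 * \<delta>))"
proof -
  have "bvt_cond_scale m1 s11 s12 s22 \<delta> x * (\<delta> + 1) = (\<delta> + (x - m1)\<^sup>2 / s11) * ((s11 * s22 - s12\<^sup>2) / s11)"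
    using assms by (simp add: bvt_cond_scale_def)
  also have "\<delta> + (x - m1)\<^sup>2 / s11 = \<delta> * (1 + (x - m1)\<^sup>2 / (s11 * \<delta>))"
    using assms by (simp add: field_simps)
  finally show ?thesis
    by simp
qed

lemma bvt_quadratic_form_factor:
  assumes s11: "s11 > 0" and d: "s11 * s22 - s12\<^sup>2 > 0" and \<delta>: "\<delta> > 0"
  shows "1 + (s22 * (x - m1)\<^sup>2 - 2 * s12 * (x - m1) * (y - m2) + s11 * (y - m2)\<^sup>2) / (s11 * s22 - s12\<^sup>2) / \<delta>
           = (1 + (x - m1)\<^sup>2 / (s11 * \<delta>))
             * (1 + (y - bvt_cond_loc m1 m2 s11 s12 x)\<^sup>2 / (bvt_cond_scale m1 s11 s12 s22 \<delta> x * (\<delta> + 1)))"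
proof -
  define d where "d = s11 * s22 - s12\<^sup>2"
  define a where "a = x - m1"
  define r where "r = y - bvt_cond_loc m1 m2 s11 s12 x"
  define K where "K = 1 + a\<^sup>2 / (s11 * \<delta>)"
  have d_pos: "d > 0" and K_pos: "K > 0"
    using assms by (simp_all add: d_def K_def add_pos_nonneg)
  have "(s22 * a\<^sup>2 - 2 * s12 * a * (y - m2) + s11 * (y - m2)\<^sup>2) / d = a\<^sup>2 / s11 + s11 * r\<^sup>2 / d"
    using s11 d_pos
    by (simp add: r_def a_def bvt_cond_loc_def d_def field_simps)
       (simp add: power2_eq_square power4_eq_xxxx algebra_simps)
  then have "1 + (s22 * a\<^sup>2 - 2 * s12 * a * (y - m2) + s11 * (y - m2)\<^sup>2) / d / \<delta>
      = 1 + (a\<^sup>2 / s11 + s11 * r\<^sup>2 / d) / \<delta>"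
    by simp
  also have "\<dots> = K + s11 * r\<^sup>2 / (\<delta> * d)"
    using s11 \<delta> by (simp add: K_def field_simps)
  also have "\<dots> = K * (1 + r\<^sup>2 / (\<delta> * d / s11 * K))"
    using s11 d_pos \<delta> K_pos by (simp add: field_simps)
  also have "\<delta> * d / s11 * K = bvt_cond_scale m1 s11 s12 s22 \<delta> x * (\<delta> + 1)"
    using s11 \<delta> by (simp add: bvt_cond_scale_mult_dof d_def K_def a_def)
  finally show ?thesis
    by (simp only: d_def a_def K_def r_def)
qed

lemma sqrt_mult_bvt_cond_scale:
  assumes "s11 \<noteq> 0" and "\<delta> > 0"
  shows "sqrt (s11 * \<delta> * pi) * sqrt (bvt_cond_scale m1 s11 s12 s22 \<delta> x * (\<delta> + 1) * pi)
           = \<delta> * pi * sqrt (s11 * s22 - s12\<^sup>2) * sqrt (1 + (x - m1)\<^sup>2 / (s11 * \<delta>))"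
proof -
  have "s11 * \<delta> * pi * (bvt_cond_scale m1 s11 s12 s22 \<delta> x * (\<delta> + 1) * pi)
      = (\<delta> * pi)\<^sup>2 * (s11 * s22 - s12\<^sup>2) * (1 + (x - m1)\<^sup>2 / (s11 * \<delta>))"
    using assms by (simp add: bvt_cond_scale_mult_dof power2_eq_square)
  then show ?thesis
    using assms by (simp add: real_sqrt_mult[symmetric]) (simp add: real_sqrt_mult)
qed

lemma bvt_dens_factor:
  assumes s11: "s11 > 0" and d: "s11 * s22 - s12\<^sup>2 > 0" and \<delta>: "\<delta> > 0"
  shows "bvt_dens m1 m2 s11 s12 s22 \<delta> (x, y)
           = t_dens \<delta> m1 s11 x
             * t_dens (\<delta> + 1) (bvt_cond_loc m1 m2 s11 s12 x) (bvt_cond_scale m1 s11 s12 s22 \<delta> x) y"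
proof -
  define d where "d = s11 * s22 - s12\<^sup>2"
  define S2 where "S2 = bvt_cond_scale m1 s11 s12 s22 \<delta> x"
  define K where "K = 1 + (x - m1)\<^sup>2 / (s11 * \<delta>)"
  define Q where "Q = 1 + (y - bvt_cond_loc m1 m2 s11 s12 x)\<^sup>2 / (S2 * (\<delta> + 1))"
  have S2_pos: "S2 > 0"
    using bvt_cond_scale_pos[OF assms] by (simp add: S2_def)
  have K_pos: "K > 0" and Q_pos: "Q > 0"
    using assms S2_pos by (simp_all add: K_def Q_def add_pos_nonneg)
  have "bvt_dens m1 m2 s11 s12 s22 \<delta> (x, y)
      = Gamma ((\<delta> + 2) / 2) / (Gamma (\<delta> / 2) * \<delta> * pi * sqrt d) * (K * Q) powr -((\<delta> + 2) / 2)"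
    unfolding bvt_dens_def Let_def fst_conv snd_conv d_def K_def Q_def S2_def
    by (simp only: bvt_quadratic_form_factor[OF assms])
  also have "\<dots> = Gamma ((\<delta> + 2) / 2) / (Gamma (\<delta> / 2) * \<delta> * pi * sqrt d)
      * (K powr -((\<delta> + 1) / 2) / sqrt K) * Q powr -((\<delta> + 2) / 2)"
  proof -
    have "-((\<delta> + 2) / 2) = -((\<delta> + 1) / 2) - 1/2"
      by (simp add: field_simps)
    then have "K powr -((\<delta> + 2) / 2) = K powr -((\<delta> + 1) / 2) / sqrt K"
      using K_pos by (simp only: powr_diff powr_half_sqrt less_imp_le)
    then show ?thesis
      using K_pos Q_pos by (simp add: powr_mult)
  qed
  also have "\<dots> = (Gamma ((\<delta> + 1) / 2) / (sqrt (s11 * \<delta> * pi) * Gamma (\<delta> / 2)) * K powr -((\<delta> + 1) / 2))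
      * (Gamma ((\<delta> + 2) / 2) / (sqrt (S2 * (\<delta> + 1) * pi) * Gamma ((\<delta> + 1) / 2)) * Q powr -((\<delta> + 2) / 2))"
  proof -
    have "sqrt (s11 * \<delta> * pi) * sqrt (S2 * (\<delta> + 1) * pi) = \<delta> * pi * sqrt d * sqrt K"
      unfolding S2_def d_def K_def using s11 \<delta> by (intro sqrt_mult_bvt_cond_scale) auto
    moreover have "Gamma ((\<delta> + 1) / 2) \<noteq> 0"
      using \<delta> by (auto intro!: dual_order.strict_implies_not_eq)
    ultimately show ?thesis
      by (simp add: field_simps)
  qed
  also have "\<dots> = t_dens \<delta> m1 s11 x
      * t_dens (\<delta> + 1) (bvt_cond_loc m1 m2 s11 s12 x) (bvt_cond_scale m1 s11 s12 s22 \<delta> x) y"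
  proof -
    have "(\<delta> + 1 + 1) / 2 = (\<delta> + 2) / 2"
      by simp
    then show ?thesis
      by (simp add: t_dens_def K_def Q_def S2_def ac_simps)
  qed
  finally show ?thesis .
qed

lemma bvt_dens_swap: "bvt_dens m1 m2 s11 s12 s22 \<delta> (y, x) = bvt_dens m2 m1 s22 s12 s11 \<delta> (x, y)"
  unfolding bvt_dens_def Let_def by (simp add: algebra_simps)

lemma bvt_dens_nonneg:
  assumes "\<delta> > 0" and "s11 * s22 - s12\<^sup>2 \<ge> 0"
  shows "bvt_dens m1 m2 s11 s12 s22 \<delta> p \<ge> 0"
  using assms by (simp add: bvt_dens_def Let_def less_imp_le)

lemma borel_measurable_bvt_dens [measurable]:
  "bvt_dens m1 m2 s11 s12 s22 \<delta> \<in> borel_measurable (lborel \<Otimes>\<^sub>M lborel)"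
  unfolding bvt_dens_def Let_def by measurable

lemma integrable_abs_fst_bvt_dens:
  assumes s11: "s11 > 0" and d: "s11 * s22 - s12\<^sup>2 > 0" and \<delta>: "\<delta> > 1"
  shows "integrable (lborel \<Otimes>\<^sub>M lborel) (\<lambda>p. \<bar>fst p\<bar> * bvt_dens m1 m2 s11 s12 s22 \<delta> p)"
proof (rule lborel_pair.Fubini_integrable)
  let ?cond = "\<lambda>x. t_dens (\<delta> + 1) (bvt_cond_loc m1 m2 s11 s12 x) (bvt_cond_scale m1 s11 s12 s22 \<delta> x)"
  have cond: "has_bochner_integral lborel (?cond x) 1" for x
    using assms bvt_cond_scale_pos[OF s11 d, of \<delta>] by (intro has_bochner_integral_t_dens) auto
  have factor: "\<bar>x\<bar> * bvt_dens m1 m2 s11 s12 s22 \<delta> (x, y) = (\<bar>x\<bar> * t_dens \<delta> m1 s11 x) * ?cond x y" for x y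
    using assms by (simp add: bvt_dens_factor)
  have "integrable lborel (\<lambda>x. x * t_dens \<delta> m1 s11 x)"
    using has_bochner_integral_t_dens_first_moment[OF \<delta> s11, of 0 m1] by (simp add: has_bochner_integral_iff)
  then have "integrable lborel (\<lambda>x. \<bar>x\<bar> * t_dens \<delta> m1 s11 x)"
    using s11 \<delta> by (auto dest: integrable_abs simp: abs_mult t_dens_nonneg)
  moreover have "(\<integral>y. norm (\<bar>fst (x, y)\<bar> * bvt_dens m1 m2 s11 s12 s22 \<delta> (x, y)) \<partial>lborel) = \<bar>x\<bar> * t_dens \<delta> m1 s11 x" for x
  proof -
    have "norm (\<bar>x\<bar> * bvt_dens m1 m2 s11 s12 s22 \<delta> (x, y)) = (\<bar>x\<bar> * t_dens \<delta> m1 s11 x) * ?cond x y" for y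
      using assms bvt_dens_nonneg[of \<delta> s11 s22 s12 m1 m2 "(x, y)"] by (simp add: abs_mult flip: factor)
    then show ?thesis
      using cond[of x] by (simp add: has_bochner_integral_iff)
  qed
  ultimately show "integrable lborel (\<lambda>x. \<integral>y. norm (\<bar>fst (x, y)\<bar> * bvt_dens m1 m2 s11 s12 s22 \<delta> (x, y)) \<partial>lborel)"
    by simp
  show "AE x in lborel. integrable lborel (\<lambda>y. \<bar>fst (x, y)\<bar> * bvt_dens m1 m2 s11 s12 s22 \<delta> (x, y))"
    using cond by (auto simp: factor has_bochner_integral_iff)
qed simp

lemma integrable_abs_snd_bvt_dens:
  assumes s11: "s11 > 0" and d: "s11 * s22 - s12\<^sup>2 > 0" and \<delta>: "\<delta> > 1"
  shows "integrable (lborel \<Otimes>\<^sub>M lborel) (\<lambda>p. \<bar>snd p\<bar> * bvt_dens m1 m2 s11 s12 s22 \<delta> p)"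
proof -
  have "s11 * s22 > 0"
    using d by (smt (verit) zero_le_power2)
  then have s22: "s22 > 0"
    using s11 by (rule zero_less_mult_pos)
  have "integrable (lborel \<Otimes>\<^sub>M lborel) (\<lambda>(x, y). \<bar>fst (y, x)\<bar> * bvt_dens m2 m1 s22 s12 s11 \<delta> (y, x))"
    using s22 d \<delta> by (intro lborel_pair.integrable_product_swap integrable_abs_fst_bvt_dens)
      (simp_all add: mult.commute)
  then show ?thesis
    by (simp add: case_prod_beta' bvt_dens_swap[of m2 m1 s22 s12 s11 \<delta>])
qed

lemma integral_bvt_dens_sum_Ioi_fst:
  assumes s11: "s11 > 0" and d: "s11 * s22 - s12\<^sup>2 > 0" and \<delta>: "\<delta> > 1"
  shows "(\<integral>p. bvt_dens m1 m2 s11 s12 s22 \<delta> p * ((fst p + snd p) * indicator {z<..} (fst p)) \<partial>(lborel \<Otimes>\<^sub>M lborel))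
           = (\<integral>x. indicator {z<..} x * ((x + bvt_cond_loc m1 m2 s11 s12 x) * t_dens \<delta> m1 s11 x) \<partial>lborel)"
proof -
  let ?f = "\<lambda>p. bvt_dens m1 m2 s11 s12 s22 \<delta> p * ((fst p + snd p) * indicator {z<..} (fst p))"
  have "integrable (lborel \<Otimes>\<^sub>M lborel)
      (\<lambda>p. \<bar>fst p\<bar> * bvt_dens m1 m2 s11 s12 s22 \<delta> p + \<bar>snd p\<bar> * bvt_dens m1 m2 s11 s12 s22 \<delta> p)"
    using integrable_abs_fst_bvt_dens[OF assms] integrable_abs_snd_bvt_dens[OF assms]
    by (rule Bochner_Integration.integrable_add)
  then have integrable: "integrable (lborel \<Otimes>\<^sub>M lborel) ?f"
  proof (rule Bochner_Integration.integrable_bound)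
    show "?f \<in> borel_measurable (lborel \<Otimes>\<^sub>M lborel)"
      by measurable
    have "\<bar>fst p + snd p\<bar> * indicator {z<..} (fst p) \<le> \<bar>fst p\<bar> + \<bar>snd p\<bar>" for p :: "real \<times> real"
      by (auto simp: indicator_def)
    then show "AE p in lborel \<Otimes>\<^sub>M lborel. norm (?f p)
        \<le> norm (\<bar>fst p\<bar> * bvt_dens m1 m2 s11 s12 s22 \<delta> p + \<bar>snd p\<bar> * bvt_dens m1 m2 s11 s12 s22 \<delta> p)"
      using bvt_dens_nonneg[of \<delta> s11 s22 s12 m1 m2] d \<delta>
      by (intro AE_I2) (simp add: abs_mult flip: distrib_right, metis mult.commute mult_left_mono)
  qed
  have inner: "(\<integral>y. bvt_dens m1 m2 s11 s12 s22 \<delta> (x, y) * ((x + y) * indicator {z<..} x) \<partial>lborel)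
      = indicator {z<..} x * ((x + bvt_cond_loc m1 m2 s11 s12 x) * t_dens \<delta> m1 s11 x)" for x
  proof -
    let ?cond = "t_dens (\<delta> + 1) (bvt_cond_loc m1 m2 s11 s12 x) (bvt_cond_scale m1 s11 s12 s22 \<delta> x)"
    have "has_bochner_integral lborel (\<lambda>y. (x + y) * ?cond y) (x + bvt_cond_loc m1 m2 s11 s12 x)"
      using \<delta> bvt_cond_scale_pos[OF s11 d, of \<delta>] by (intro has_bochner_integral_t_dens_first_moment) auto
    then have "has_bochner_integral lborel (\<lambda>y. (indicator {z<..} x * t_dens \<delta> m1 s11 x) * ((x + y) * ?cond y))
        ((indicator {z<..} x * t_dens \<delta> m1 s11 x) * (x + bvt_cond_loc m1 m2 s11 s12 x))"
      by (rule has_bochner_integral_mult_right)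
    moreover have "(\<lambda>y. bvt_dens m1 m2 s11 s12 s22 \<delta> (x, y) * ((x + y) * indicator {z<..} x))
        = (\<lambda>y. (indicator {z<..} x * t_dens \<delta> m1 s11 x) * ((x + y) * ?cond y))"
      using assms by (simp add: fun_eq_iff bvt_dens_factor ac_simps)
    ultimately show ?thesis
      by (simp add: has_bochner_integral_integral_eq ac_simps)
  qed
  show ?thesis
    using lborel_pair.integral_fst'[OF integrable] by (simp only: inner fst_conv snd_conv)
qed

lemma integral_Ioi_bvt_cond_loc:
  assumes s11: "s11 > 0" and \<delta>: "\<delta> > 2"
  shows "(\<integral>x. indicator {z<..} x * ((x + bvt_cond_loc m1 m2 s11 s12 x) * t_dens \<delta> m1 s11 x) \<partial>lborel)
           = (m1 + m2) * (1 - t_cdf \<delta> 0 1 ((z - m1) / sqrt s11))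
             + (1 + s12 / s11) * (sqrt s11 * (\<delta> / (\<delta> - 2))
                 * t_dens (\<delta> - 2) 0 (\<delta> / (\<delta> - 2)) ((z - m1) / sqrt s11))"
proof -
  have t: "integrable lborel (t_dens \<delta> m1 s11)" "integrable lborel (\<lambda>x. (x - m1) * t_dens \<delta> m1 s11 x)"
    using has_bochner_integral_t_dens[of \<delta> s11 m1] has_bochner_integral_t_dens_centered[of \<delta> s11 m1] assms
    by (simp_all add: has_bochner_integral_iff)
  have "integrable lborel (\<lambda>x. indicator {z<..} x * t_dens \<delta> m1 s11 x)"
    "integrable lborel (\<lambda>x. indicator {z<..} x * ((x - m1) * t_dens \<delta> m1 s11 x))"
    using integrable_mult_indicator[OF _ t(1), of "{z<..}"] integrable_mult_indicator[OF _ t(2), of "{z<..}"]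
    by simp_all
  moreover have "indicator {z<..} x * ((x + bvt_cond_loc m1 m2 s11 s12 x) * t_dens \<delta> m1 s11 x)
      = (m1 + m2) * (indicator {z<..} x * t_dens \<delta> m1 s11 x)
        + (1 + s12 / s11) * (indicator {z<..} x * ((x - m1) * t_dens \<delta> m1 s11 x))" for x
    using s11 by (simp add: bvt_cond_loc_def field_simps)
  ultimately show ?thesis
    using integral_Ioi_t_dens[of \<delta> s11 z m1] integral_Ioi_t_dens_centered[OF \<delta> s11, of z m1] s11 \<delta>
    by simp
qed

lemma (in prob_space) distributed_bvt_swap:
  assumes "distributed M lborel (\<lambda>\<omega>. (U \<omega>, V \<omega>)) (\<lambda>p. ennreal (bvt_dens m1 m2 s11 s12 s22 \<delta> p))"
  shows "distributed M lborel (\<lambda>\<omega>. (V \<omega>, U \<omega>)) (\<lambda>p. ennreal (bvt_dens m2 m1 s22 s12 s11 \<delta> p))"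
proof -
  have "distributed M (lborel \<Otimes>\<^sub>M lborel) (\<lambda>\<omega>. (V \<omega>, U \<omega>))
      (\<lambda>(x, y). ennreal (bvt_dens m1 m2 s11 s12 s22 \<delta> (y, x)))"
    using assms unfolding lborel_prod[symmetric] by (intro distributed_swap sigma_finite_lborel)
  then show ?thesis
    by (simp add: lborel_prod case_prod_beta' bvt_dens_swap[of m1 m2 s11 s12 s22 \<delta>])
qed

lemma bvt_truncated_sum_expectation:
  assumes dist: "distributed M lborel (\<lambda>\<omega>. (U \<omega>, V \<omega>)) (\<lambda>p. ennreal (bvt_dens m1 m2 s11 s12 s22 \<delta> p))"
    and s11: "s11 > 0" and d: "s11 * s22 - s12\<^sup>2 > 0" and \<delta>: "\<delta> > 2"
  shows "(LINT \<omega>|M. (U \<omega> + V \<omega>) * indicator {\<omega> \<in> space M. z < U \<omega>} \<omega>)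
           = (m1 + m2) * (1 - t_cdf \<delta> 0 1 ((z - m1) / sqrt s11))
             + (1 + s12 / s11) * (sqrt s11 * (\<delta> / (\<delta> - 2))
                 * t_dens (\<delta> - 2) 0 (\<delta> / (\<delta> - 2)) ((z - m1) / sqrt s11))"
proof -
  let ?g = "\<lambda>p :: real \<times> real. (fst p + snd p) * indicator {z<..} (fst p)"
  have "?g \<in> borel_measurable lborel"
    unfolding lborel_prod[symmetric] by measurable
  then have "(\<integral>p. bvt_dens m1 m2 s11 s12 s22 \<delta> p * ?g p \<partial>lborel) = (\<integral>\<omega>. ?g (U \<omega>, V \<omega>) \<partial>M)"
    using d \<delta> by (intro distributed_integral[OF dist]) (auto intro: bvt_dens_nonneg)
  also have "\<dots> = (LINT \<omega>|M. (U \<omega> + V \<omega>) * indicator {\<omega> \<in> space M. z < U \<omega>} \<omega>)"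
    by (intro Bochner_Integration.integral_cong) (auto simp: indicator_def)
  finally show ?thesis
    using integral_bvt_dens_sum_Ioi_fst[OF s11 d, of \<delta> m1 m2 z] integral_Ioi_bvt_cond_loc[OF s11 \<delta>] \<delta>
    by (simp add: lborel_prod)
qed

text \<open>No positivity assumption on \<open>B\<close> is needed: for a null event both sides vanish, the left one
  because division by zero yields zero.\<close>

lemma measure_mult_cond_exp_event:
  assumes "finite_measure M" and B: "B \<in> sets M"
  shows "measure M B * cond_exp_event M X B = (LINT \<omega>|M. X \<omega> * indicator B \<omega>)"
proof (cases "measure M B = 0")
  case True
  interpret finite_measure M
    by fact
  have "B \<in> null_sets M"
    using True B by (simp add: emeasure_eq_measure null_sets_def)
  then have "AE \<omega> in M. X \<omega> * indicator B \<omega> = 0"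
    by (rule AE_mp[OF AE_not_in]) (auto intro!: AE_I2)
  then show ?thesis
    using True by (simp add: integral_eq_zero_AE)
next
  case False
  then show ?thesis
    by (simp add: cond_exp_event_def)
qed

lemma (in prob_space) bvt_measure_mult_cond_exp_sum:
  assumes dist: "distributed M lborel (\<lambda>\<omega>. (U \<omega>, V \<omega>)) (\<lambda>p. ennreal (bvt_dens m1 m2 s11 s12 s22 \<delta> p))"
    and "s11 > 0" and "s11 * s22 - s12\<^sup>2 > 0" and "\<delta> > 2"
  shows "measure M {\<omega> \<in> space M. U \<omega> > z} * cond_exp_event M (\<lambda>\<omega>. U \<omega> + V \<omega>) {\<omega> \<in> space M. U \<omega> > z}
           = (m1 + m2) * (1 - t_cdf \<delta> 0 1 ((z - m1) / sqrt s11))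
             + (1 + s12 / s11) * (sqrt s11 * (\<delta> / (\<delta> - 2))
                 * t_dens (\<delta> - 2) 0 (\<delta> / (\<delta> - 2)) ((z - m1) / sqrt s11))"
proof -
  have "U \<in> borel_measurable M"
    using distributed_measurable[OF dist] by (simp add: lborel_prod[symmetric] measurable_pair_iff comp_def)
  then have "{\<omega> \<in> space M. U \<omega> > z} \<in> sets M"
    by measurable
  then show ?thesis
    using measure_mult_cond_exp_event[OF finite_measure] bvt_truncated_sum_expectation[OF assms] by simp
qed

theorem lemma4:
  fixes M :: "'a measure" and A :: "'a \<Rightarrow> 'b" and U V :: "'a \<Rightarrow> real"
    and u v :: 'b and p_u p_v \<mu> \<sigma> \<rho> \<delta> z :: real
    and f :: "real \<Rightarrow> real"
  assumes "prob_space M"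
    and "u \<noteq> v"
    and "A \<in> measurable M (count_space UNIV)"
    and "\<forall>\<omega>\<in>space M. A \<omega> \<in> {u, v}"
    and "measure M {\<omega>\<in>space M. A \<omega> = u} = p_u"
    and "measure M {\<omega>\<in>space M. A \<omega> = v} = p_v"
    and "p_u + p_v = 1"
    and "\<sigma> > 0" and "-1 < \<rho>" and "\<rho> < 1" and "\<delta> > 2"
    and "distributed M lborel (\<lambda>\<omega>. (U \<omega>, V \<omega>))
           (\<lambda>xy. ennreal (bvt_dens \<mu> \<mu> (\<sigma>\<^sup>2) (\<rho> * \<sigma>\<^sup>2) (\<sigma>\<^sup>2) \<delta> xy))"
    and "prob_space.indep_set M (sets (vimage_algebra (space M) A (count_space UNIV)))
           (sets (vimage_algebra (space M) (\<lambda>\<omega>. (U \<omega>, V \<omega>)) (borel :: (real \<times> real) measure)))"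
    and "\<And>z. f z =
           p_u * measure M {\<omega>\<in>space M. U \<omega> > z}
               * cond_exp_event M (\<lambda>\<omega>. U \<omega> + V \<omega>) {\<omega>\<in>space M. U \<omega> > z}
         + p_v * measure M {\<omega>\<in>space M. V \<omega> > z}
               * cond_exp_event M (\<lambda>\<omega>. U \<omega> + V \<omega>) {\<omega>\<in>space M. V \<omega> > z}"
  shows "f z = 2 * \<mu> * (1 - t_cdf \<delta> 0 1 ((z - \<mu>) / \<sigma>))
              + \<sigma> * (1 + \<rho>) * (\<delta> / (\<delta> - 2))
                * t_dens (\<delta> - 2) 0 (\<delta> / (\<delta> - 2)) ((z - \<mu>) / \<sigma>)"
proof -
  interpret prob_space M
    by fact
  have s11: "\<sigma>\<^sup>2 > 0"
    using assms(8) by simp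
  have "\<rho>\<^sup>2 < 1"
    using assms(9,10) by (simp add: abs_square_less_1)
  then have d: "\<sigma>\<^sup>2 * \<sigma>\<^sup>2 - (\<rho> * \<sigma>\<^sup>2)\<^sup>2 > 0"
    using s11 by (simp add: power_mult_distrib)
  define R where "R = 2 * \<mu> * (1 - t_cdf \<delta> 0 1 ((z - \<mu>) / \<sigma>))
    + \<sigma> * (1 + \<rho>) * (\<delta> / (\<delta> - 2)) * t_dens (\<delta> - 2) 0 (\<delta> / (\<delta> - 2)) ((z - \<mu>) / \<sigma>)"
  have U: "measure M {\<omega>\<in>space M. U \<omega> > z} * cond_exp_event M (\<lambda>\<omega>. U \<omega> + V \<omega>) {\<omega>\<in>space M. U \<omega> > z} = R"
    using bvt_measure_mult_cond_exp_sum[OF assms(12) s11 d assms(11), of z] assms(8)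
    by (simp add: R_def algebra_simps)
  have V: "measure M {\<omega>\<in>space M. V \<omega> > z} * cond_exp_event M (\<lambda>\<omega>. U \<omega> + V \<omega>) {\<omega>\<in>space M. V \<omega> > z} = R"
    using bvt_measure_mult_cond_exp_sum[OF distributed_bvt_swap[OF assms(12)] s11 d assms(11), of z] assms(8)
    by (simp add: R_def add.commute algebra_simps)
  have "f z = (p_u + p_v) * R"
    by (simp only: assms(14) mult.assoc U V flip: distrib_right)
  then show ?thesis
    using assms(7) by (simp add: R_def)
qed

end
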